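(* Let $\mathcal{C}$ be a Frobenius category with stable category $\underline{\mathcal{C}}$ and projection functor $\pi\colon\mathcal{C}\to\underline{\mathcal{C}}$. Let $\mathcal{T}$ be a subcategory of $\mathcal{C}$ containing all projective-injective objects, and let $M\in\mathcal{C}$. If $\pi(M)$ has a $\pi(\mathcal{T})$-precover (respectively $\pi(\mathcal{T})$-preenvelope) in $\underline{\mathcal{C}}$, then $M$ has a $\mathcal{T}$-precover (respectively $\mathcal{T}$-preenvelope) in $\mathcal{C}$.
   Context: For a subcategory $\mathcal{B}$ of a category, a $\mathcal{B}$-precover of $M$ is a morphism $f\colon B\to M$ with $B\in\mathcal{B}$ such that every morphism $B'\to M$ with $B'\in\mathcal{B}$ factors through $f$; a $\mathcal{B}$-preenvelope is defined dually. Subcategories are full and additive. The stable category $\underline{\mathcal{C}}$ has the same objects as $\mathcal{C}$ and morphisms modulo those factoring through projective-injective objects. *)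

theory Defs
  imports Main
begin

record ('o, 'm) addcat =
  obj   :: "'o set"
  mor   :: "'m set"
  dm    :: "'m \<Rightarrow> 'o"
  cd    :: "'m \<Rightarrow> 'o"
  cmp   :: "'m \<Rightarrow> 'm \<Rightarrow> 'm"      (* cmp C g f = g o f *)
  idm   :: "'o \<Rightarrow> 'm"
  madd  :: "'m \<Rightarrow> 'm \<Rightarrow> 'm"
  mneg  :: "'m \<Rightarrow> 'm"
  mzero :: "'o \<Rightarrow> 'o \<Rightarrow> 'm"

definition Hom :: "('o,'m,'x) addcat_scheme \<Rightarrow> 'o \<Rightarrow> 'o \<Rightarrow> 'm set" where
  "Hom C X Y = {f \<in> mor C. dm C f = X \<and> cd C f = Y}"

definition category :: "('o,'m,'x) addcat_scheme \<Rightarrow> bool" where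
  "category C \<longleftrightarrow>
     (\<forall>f\<in>mor C. dm C f \<in> obj C \<and> cd C f \<in> obj C) \<and>
     (\<forall>X\<in>obj C. idm C X \<in> Hom C X X) \<and>
     (\<forall>f\<in>mor C. \<forall>g\<in>mor C. dm C g = cd C f \<longrightarrow> cmp C g f \<in> Hom C (dm C f) (cd C g)) \<and>
     (\<forall>f\<in>mor C. cmp C f (idm C (dm C f)) = f \<and> cmp C (idm C (cd C f)) f = f) \<and>
     (\<forall>f\<in>mor C. \<forall>g\<in>mor C. \<forall>h\<in>mor C. dm C g = cd C f \<longrightarrow> dm C h = cd C g \<longrightarrow>
        cmp C h (cmp C g f) = cmp C (cmp C h g) f)"

definition preadditive :: "('o,'m,'x) addcat_scheme \<Rightarrow> bool" where
  "preadditive C \<longleftrightarrow> category C \<and>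
     (\<forall>X\<in>obj C. \<forall>Y\<in>obj C.
        mzero C X Y \<in> Hom C X Y \<and>
        (\<forall>f\<in>Hom C X Y. mneg C f \<in> Hom C X Y \<and> madd C f (mzero C X Y) = f
                          \<and> madd C f (mneg C f) = mzero C X Y) \<and>
        (\<forall>f\<in>Hom C X Y. \<forall>g\<in>Hom C X Y. madd C f g \<in> Hom C X Y \<and> madd C f g = madd C g f) \<and>
        (\<forall>f\<in>Hom C X Y. \<forall>g\<in>Hom C X Y. \<forall>h\<in>Hom C X Y.
            madd C (madd C f g) h = madd C f (madd C g h))) \<and>
     (\<forall>X\<in>obj C. \<forall>Y\<in>obj C. \<forall>Z\<in>obj C.
        (\<forall>f\<in>Hom C X Y. \<forall>f'\<in>Hom C X Y. \<forall>g\<in>Hom C Y Z.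
            cmp C g (madd C f f') = madd C (cmp C g f) (cmp C g f')) \<and>
        (\<forall>f\<in>Hom C X Y. \<forall>g\<in>Hom C Y Z. \<forall>g'\<in>Hom C Y Z.
            cmp C (madd C g g') f = madd C (cmp C g f) (cmp C g' f)))"

definition zero_object :: "('o,'m,'x) addcat_scheme \<Rightarrow> 'o \<Rightarrow> bool" where
  "zero_object C Z \<longleftrightarrow> Z \<in> obj C \<and>
     (\<forall>X\<in>obj C. (\<exists>!f. f \<in> Hom C Z X) \<and> (\<exists>!f. f \<in> Hom C X Z))"

definition biproduct :: "('o,'m,'x) addcat_scheme \<Rightarrow> 'o \<Rightarrow> 'o \<Rightarrow> 'o \<Rightarrow> 'm \<Rightarrow> 'm \<Rightarrow> 'm \<Rightarrow> 'm \<Rightarrow> bool" where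
  "biproduct C X Y S i1 i2 p1 p2 \<longleftrightarrow>
     S \<in> obj C \<and> i1 \<in> Hom C X S \<and> i2 \<in> Hom C Y S \<and> p1 \<in> Hom C S X \<and> p2 \<in> Hom C S Y \<and>
     cmp C p1 i1 = idm C X \<and> cmp C p2 i2 = idm C Y \<and>
     cmp C p1 i2 = mzero C Y X \<and> cmp C p2 i1 = mzero C X Y \<and>
     madd C (cmp C i1 p1) (cmp C i2 p2) = idm C S"

definition additive :: "('o,'m,'x) addcat_scheme \<Rightarrow> bool" where
  "additive C \<longleftrightarrow> preadditive C \<and> (\<exists>Z. zero_object C Z) \<and>
     (\<forall>X\<in>obj C. \<forall>Y\<in>obj C. \<exists>S i1 i2 p1 p2. biproduct C X Y S i1 i2 p1 p2)"

definition iso :: "('o,'m,'x) addcat_scheme \<Rightarrow> 'm \<Rightarrow> bool" where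
  "iso C f \<longleftrightarrow> f \<in> mor C \<and>
     (\<exists>g\<in>Hom C (cd C f) (dm C f). cmp C g f = idm C (dm C f) \<and> cmp C f g = idm C (cd C f))"

definition is_kernel :: "('o,'m,'x) addcat_scheme \<Rightarrow> 'm \<Rightarrow> 'm \<Rightarrow> bool" where
  "is_kernel C i d \<longleftrightarrow> i \<in> mor C \<and> d \<in> mor C \<and> cd C i = dm C d \<and>
     cmp C d i = mzero C (dm C i) (cd C d) \<and>
     (\<forall>X\<in>obj C. \<forall>g\<in>Hom C X (dm C d). cmp C d g = mzero C X (cd C d) \<longrightarrow>
        (\<exists>!h. h \<in> Hom C X (dm C i) \<and> cmp C i h = g))"

definition is_cokernel :: "('o,'m,'x) addcat_scheme \<Rightarrow> 'm \<Rightarrow> 'm \<Rightarrow> bool" where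
  "is_cokernel C d i \<longleftrightarrow> i \<in> mor C \<and> d \<in> mor C \<and> cd C i = dm C d \<and>
     cmp C d i = mzero C (dm C i) (cd C d) \<and>
     (\<forall>Y\<in>obj C. \<forall>g\<in>Hom C (cd C i) Y. cmp C g i = mzero C (dm C i) Y \<longrightarrow>
        (\<exists>!h. h \<in> Hom C (cd C d) Y \<and> cmp C h d = g))"

definition kc_pair :: "('o,'m,'x) addcat_scheme \<Rightarrow> 'm \<Rightarrow> 'm \<Rightarrow> bool" where
  "kc_pair C i d \<longleftrightarrow> is_kernel C i d \<and> is_cokernel C d i"

definition inflation :: "('o,'m,'x) addcat_scheme \<Rightarrow> ('m \<times> 'm) set \<Rightarrow> 'm \<Rightarrow> bool" where
  "inflation C E i \<longleftrightarrow> (\<exists>d. (i, d) \<in> E)"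

definition deflation :: "('o,'m,'x) addcat_scheme \<Rightarrow> ('m \<times> 'm) set \<Rightarrow> 'm \<Rightarrow> bool" where
  "deflation C E d \<longleftrightarrow> (\<exists>i. (i, d) \<in> E)"

definition is_pushout :: "('o,'m,'x) addcat_scheme \<Rightarrow> 'm \<Rightarrow> 'm \<Rightarrow> 'o \<Rightarrow> 'm \<Rightarrow> 'm \<Rightarrow> bool" where
  "is_pushout C i f P i' f' \<longleftrightarrow> i \<in> mor C \<and> f \<in> mor C \<and> dm C f = dm C i \<and> P \<in> obj C \<and>
     i' \<in> Hom C (cd C f) P \<and> f' \<in> Hom C (cd C i) P \<and> cmp C i' f = cmp C f' i \<and>
     (\<forall>Z\<in>obj C. \<forall>u\<in>Hom C (cd C f) Z. \<forall>v\<in>Hom C (cd C i) Z. cmp C u f = cmp C v i \<longrightarrow>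
        (\<exists>!w. w \<in> Hom C P Z \<and> cmp C w i' = u \<and> cmp C w f' = v))"

definition is_pullback :: "('o,'m,'x) addcat_scheme \<Rightarrow> 'm \<Rightarrow> 'm \<Rightarrow> 'o \<Rightarrow> 'm \<Rightarrow> 'm \<Rightarrow> bool" where
  "is_pullback C d f P d' f' \<longleftrightarrow> d \<in> mor C \<and> f \<in> mor C \<and> cd C f = cd C d \<and> P \<in> obj C \<and>
     d' \<in> Hom C P (dm C f) \<and> f' \<in> Hom C P (dm C d) \<and> cmp C f d' = cmp C d f' \<and>
     (\<forall>Z\<in>obj C. \<forall>u\<in>Hom C Z (dm C f). \<forall>v\<in>Hom C Z (dm C d). cmp C f u = cmp C d v \<longrightarrow>
        (\<exists>!w. w \<in> Hom C Z P \<and> cmp C d' w = u \<and> cmp C f' w = v))"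

definition exact_structure :: "('o,'m,'x) addcat_scheme \<Rightarrow> ('m \<times> 'm) set \<Rightarrow> bool" where
  "exact_structure C E \<longleftrightarrow>
     (\<forall>(i, d)\<in>E. kc_pair C i d) \<and>
     \<comment> \<open>closed under isomorphisms of short exact sequences\<close>
     (\<forall>(i, d)\<in>E. \<forall>i' d' a b c.
        kc_pair C i' d' \<and> a \<in> Hom C (dm C i) (dm C i') \<and> b \<in> Hom C (cd C i) (cd C i') \<and>
        c \<in> Hom C (cd C d) (cd C d') \<and> iso C a \<and> iso C b \<and> iso C c \<and>
        cmp C i' a = cmp C b i \<and> cmp C d' b = cmp C c d \<longrightarrow> (i', d') \<in> E) \<and>
     \<comment> \<open>[E0], [E0op]\<close>
     (\<forall>X\<in>obj C. deflation C E (idm C X) \<and> inflation C E (idm C X)) \<and>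
     \<comment> \<open>[E1], [E1op]\<close>
     (\<forall>d d'. deflation C E d \<and> deflation C E d' \<and> dm C d' = cd C d \<longrightarrow> deflation C E (cmp C d' d)) \<and>
     (\<forall>i i'. inflation C E i \<and> inflation C E i' \<and> dm C i' = cd C i \<longrightarrow> inflation C E (cmp C i' i)) \<and>
     \<comment> \<open>[E2]: pushouts of inflations exist and are inflations\<close>
     (\<forall>i f. inflation C E i \<and> f \<in> mor C \<and> dm C f = dm C i \<longrightarrow>
        (\<exists>P i' f'. is_pushout C i f P i' f' \<and> inflation C E i')) \<and>
     \<comment> \<open>[E2op]: pullbacks of deflations exist and are deflations\<close>
     (\<forall>d f. deflation C E d \<and> f \<in> mor C \<and> cd C f = cd C d \<longrightarrow>
        (\<exists>P d' f'. is_pullback C d f P d' f' \<and> deflation C E d'))"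

definition projective :: "('o,'m,'x) addcat_scheme \<Rightarrow> ('m \<times> 'm) set \<Rightarrow> 'o \<Rightarrow> bool" where
  "projective C E P \<longleftrightarrow> P \<in> obj C \<and>
     (\<forall>d f. deflation C E d \<and> f \<in> Hom C P (cd C d) \<longrightarrow> (\<exists>g\<in>Hom C P (dm C d). cmp C d g = f))"

definition injective :: "('o,'m,'x) addcat_scheme \<Rightarrow> ('m \<times> 'm) set \<Rightarrow> 'o \<Rightarrow> bool" where
  "injective C E I \<longleftrightarrow> I \<in> obj C \<and>
     (\<forall>i f. inflation C E i \<and> f \<in> Hom C (dm C i) I \<longrightarrow> (\<exists>g\<in>Hom C (cd C i) I. cmp C g i = f))"

definition proj_inj :: "('o,'m,'x) addcat_scheme \<Rightarrow> ('m \<times> 'm) set \<Rightarrow> 'o \<Rightarrow> bool" where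
  "proj_inj C E P \<longleftrightarrow> projective C E P \<and> injective C E P"

definition frobenius_category :: "('o,'m,'x) addcat_scheme \<Rightarrow> ('m \<times> 'm) set \<Rightarrow> bool" where
  "frobenius_category C E \<longleftrightarrow> additive C \<and> exact_structure C E \<and>
     (\<forall>M\<in>obj C. \<exists>d. deflation C E d \<and> cd C d = M \<and> projective C E (dm C d)) \<and>
     (\<forall>M\<in>obj C. \<exists>i. inflation C E i \<and> dm C i = M \<and> injective C E (cd C i)) \<and>
     (\<forall>P. projective C E P \<longleftrightarrow> injective C E P)"

text \<open>A (full) additive subcategory, given by its class of objects: contains a zero
  object and contains a biproduct of any two of its objects.\<close>
definition additive_subcat :: "('o,'m,'x) addcat_scheme \<Rightarrow> 'o set \<Rightarrow> bool" where
  "additive_subcat C T \<longleftrightarrow> T \<subseteq> obj C \<and> (\<exists>Z\<in>T. zero_object C Z) \<and>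
     (\<forall>X\<in>T. \<forall>Y\<in>T. \<exists>S i1 i2 p1 p2. biproduct C X Y S i1 i2 p1 p2 \<and> S \<in> T)"

definition is_precover :: "('o,'m,'x) addcat_scheme \<Rightarrow> 'o set \<Rightarrow> 'o \<Rightarrow> 'o \<Rightarrow> 'm \<Rightarrow> bool" where
  "is_precover C T M B f \<longleftrightarrow> B \<in> T \<and> f \<in> Hom C B M \<and>
     (\<forall>B'\<in>T. \<forall>g\<in>Hom C B' M. \<exists>h\<in>Hom C B' B. g = cmp C f h)"

definition is_preenvelope :: "('o,'m,'x) addcat_scheme \<Rightarrow> 'o set \<Rightarrow> 'o \<Rightarrow> 'o \<Rightarrow> 'm \<Rightarrow> bool" where
  "is_preenvelope C T M B f \<longleftrightarrow> B \<in> T \<and> f \<in> Hom C M B \<and>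
     (\<forall>B'\<in>T. \<forall>g\<in>Hom C M B'. \<exists>h\<in>Hom C B B'. g = cmp C h f)"

definition has_precover where "has_precover C T M \<longleftrightarrow> (\<exists>B f. is_precover C T M B f)"
definition has_preenvelope where "has_preenvelope C T M \<longleftrightarrow> (\<exists>B f. is_preenvelope C T M B f)"

text \<open>Morphisms of the stable category are morphisms of C modulo those factoring
  through projective-injective objects; \<open>\<pi>\<close> is the identity on objects.\<close>
definition stably_zero :: "('o,'m,'x) addcat_scheme \<Rightarrow> ('m \<times> 'm) set \<Rightarrow> 'm \<Rightarrow> bool" where
  "stably_zero C E f \<longleftrightarrow> (\<exists>Q a b. proj_inj C E Q \<and> a \<in> Hom C (dm C f) Q \<and>
      b \<in> Hom C Q (cd C f) \<and> f = cmp C b a)"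

definition stable_eq :: "('o,'m,'x) addcat_scheme \<Rightarrow> ('m \<times> 'm) set \<Rightarrow> 'm \<Rightarrow> 'm \<Rightarrow> bool" where
  "stable_eq C E f g \<longleftrightarrow> f \<in> mor C \<and> g \<in> mor C \<and> dm C f = dm C g \<and> cd C f = cd C g \<and>
     stably_zero C E (madd C f (mneg C g))"

text \<open>\<open>\<pi>(T)\<close>-precover of \<open>\<pi>(M)\<close> in the stable category, written via representatives:
  a stable morphism \<open>[f] : \<pi>(B) \<rightarrow> \<pi>(M)\<close> with \<open>B \<in> T\<close> through which every stable
  morphism \<open>[g] : \<pi>(B') \<rightarrow> \<pi>(M)\<close>, \<open>B' \<in> T\<close>, factors.\<close>
definition is_stable_precover :: "('o,'m,'x) addcat_scheme \<Rightarrow> ('m \<times> 'm) set \<Rightarrow> 'o set \<Rightarrow> 'o \<Rightarrow> 'o \<Rightarrow> 'm \<Rightarrow> bool" where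
  "is_stable_precover C E T M B f \<longleftrightarrow> B \<in> T \<and> f \<in> Hom C B M \<and>
     (\<forall>B'\<in>T. \<forall>g\<in>Hom C B' M. \<exists>h\<in>Hom C B' B. stable_eq C E g (cmp C f h))"

definition is_stable_preenvelope :: "('o,'m,'x) addcat_scheme \<Rightarrow> ('m \<times> 'm) set \<Rightarrow> 'o set \<Rightarrow> 'o \<Rightarrow> 'o \<Rightarrow> 'm \<Rightarrow> bool" where
  "is_stable_preenvelope C E T M B f \<longleftrightarrow> B \<in> T \<and> f \<in> Hom C M B \<and>
     (\<forall>B'\<in>T. \<forall>g\<in>Hom C M B'. \<exists>h\<in>Hom C B B'. stable_eq C E g (cmp C h f))"

definition has_stable_precover where
  "has_stable_precover C E T M \<longleftrightarrow> (\<exists>B f. is_stable_precover C E T M B f)"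
definition has_stable_preenvelope where
  "has_stable_preenvelope C E T M \<longleftrightarrow> (\<exists>B f. is_stable_preenvelope C E T M B f)"

end

theory Submission
  imports Defs
begin

(* Let [f] : B \<rightarrow> M be a stable T-precover and d : P \<rightarrow> M a deflation from a
   projective-injective P, which lies in T. Then (f d) : B \<oplus> P \<rightarrow> M is a T-precover:
   for g : B' \<rightarrow> M there is h with g - f h factoring through a projective-injective
   object, hence through d, say g - f h = d k, and then g = (f d) \<circ> (h; k).
   Preenvelopes are dual, using an inflation M \<rightarrow> I into a projective-injective I. *)

lemma Hom_objs:
  assumes "category C" "f \<in> Hom C X Y" shows "X \<in> obj C" "Y \<in> obj C"
  using assms unfolding category_def Hom_def by auto

lemma cmp_Hom:
  assumes "category C" "f \<in> Hom C X Y" "g \<in> Hom C Y Z" shows "cmp C g f \<in> Hom C X Z"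
  using assms unfolding category_def Hom_def by auto

lemma cmp_assoc:
  assumes "category C" "f \<in> Hom C W X" "g \<in> Hom C X Y" "h \<in> Hom C Y Z"
  shows "cmp C h (cmp C g f) = cmp C (cmp C h g) f"
  using assms unfolding category_def Hom_def by auto

lemma cmp_idm_right:
  assumes "category C" "f \<in> Hom C X Y" shows "cmp C f (idm C X) = f"
  using assms unfolding category_def Hom_def by auto

lemma exact_structure_kc_pair:
  "exact_structure C E \<Longrightarrow> (i, d) \<in> E \<Longrightarrow> kc_pair C i d"
  unfolding exact_structure_def by (elim conjE) (drule bspec, assumption, simp)

lemma kc_pair_mor: "kc_pair C i d \<Longrightarrow> i \<in> mor C \<and> d \<in> mor C"
  unfolding kc_pair_def is_kernel_def by simp

lemma exact_structure_deflation_mor: "exact_structure C E \<Longrightarrow> deflation C E d \<Longrightarrow> d \<in> mor C"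
  unfolding deflation_def by (metis exact_structure_kc_pair kc_pair_mor)

lemma exact_structure_inflation_mor: "exact_structure C E \<Longrightarrow> inflation C E i \<Longrightarrow> i \<in> mor C"
  unfolding inflation_def by (metis exact_structure_kc_pair kc_pair_mor)

lemma stably_zero_factors_through_deflation:
  assumes cat: "category C" and z: "stably_zero C E f" and f: "f \<in> Hom C X Y"
    and d: "deflation C E d" "d \<in> Hom C P Y"
  shows "\<exists>k\<in>Hom C X P. f = cmp C d k"
proof -
  obtain Q a b where Q: "proj_inj C E Q" and a: "a \<in> Hom C X Q" and b: "b \<in> Hom C Q Y"
    and fba: "f = cmp C b a"
    using z f unfolding stably_zero_def Hom_def by auto
  obtain b' where b': "b' \<in> Hom C Q P" and "cmp C d b' = b"
    using Q d b unfolding proj_inj_def projective_def Hom_def by auto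
  then have "f = cmp C d (cmp C b' a)"
    using fba cmp_assoc[OF cat a b' d(2)] by simp
  then show ?thesis using cmp_Hom[OF cat a b'] by blast
qed

lemma stably_zero_factors_through_inflation:
  assumes cat: "category C" and z: "stably_zero C E f" and f: "f \<in> Hom C X Y"
    and i: "inflation C E i" "i \<in> Hom C X I"
  shows "\<exists>k\<in>Hom C I Y. f = cmp C k i"
proof -
  obtain Q a b where Q: "proj_inj C E Q" and a: "a \<in> Hom C X Q" and b: "b \<in> Hom C Q Y"
    and fba: "f = cmp C b a"
    using z f unfolding stably_zero_def Hom_def by auto
  obtain a' where a': "a' \<in> Hom C I Q" and "cmp C a' i = a"
    using Q i a unfolding proj_inj_def injective_def Hom_def by auto
  then have "f = cmp C (cmp C b a') i"
    using fba cmp_assoc[OF cat i(2) a' b] by simp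
  then show ?thesis using cmp_Hom[OF cat a' b] by blast
qed

locale preadditive_category =
  fixes C :: "('o,'m,'x) addcat_scheme"
  assumes preadditive: "preadditive C"
begin

lemma category: "category C"
  using preadditive unfolding preadditive_def by auto

lemma mzero_Hom: "X \<in> obj C \<Longrightarrow> Y \<in> obj C \<Longrightarrow> mzero C X Y \<in> Hom C X Y"
  using preadditive unfolding preadditive_def by auto

lemma madd_Hom: "f \<in> Hom C X Y \<Longrightarrow> g \<in> Hom C X Y \<Longrightarrow> madd C f g \<in> Hom C X Y"
  using preadditive Hom_objs[OF category] unfolding preadditive_def by meson

lemma mneg_Hom: "f \<in> Hom C X Y \<Longrightarrow> mneg C f \<in> Hom C X Y"
  using preadditive Hom_objs[OF category] unfolding preadditive_def by meson

lemma madd_mzero: "f \<in> Hom C X Y \<Longrightarrow> madd C f (mzero C X Y) = f"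
  using preadditive Hom_objs[OF category] unfolding preadditive_def by meson

lemma madd_mneg: "f \<in> Hom C X Y \<Longrightarrow> madd C f (mneg C f) = mzero C X Y"
  using preadditive Hom_objs[OF category] unfolding preadditive_def by meson

lemma madd_commute: "f \<in> Hom C X Y \<Longrightarrow> g \<in> Hom C X Y \<Longrightarrow> madd C f g = madd C g f"
  using preadditive Hom_objs[OF category] unfolding preadditive_def by meson

lemma madd_assoc:
  "f \<in> Hom C X Y \<Longrightarrow> g \<in> Hom C X Y \<Longrightarrow> h \<in> Hom C X Y \<Longrightarrow>
   madd C (madd C f g) h = madd C f (madd C g h)"
  using preadditive Hom_objs[OF category] unfolding preadditive_def by meson

lemma cmp_madd_left:
  assumes "f \<in> Hom C X Y" "f' \<in> Hom C X Y" "g \<in> Hom C Y Z"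
  shows "cmp C g (madd C f f') = madd C (cmp C g f) (cmp C g f')"
proof -
  have "X \<in> obj C" "Y \<in> obj C" "Z \<in> obj C" using assms Hom_objs[OF category] by blast+
  then show ?thesis using assms preadditive unfolding preadditive_def by blast
qed

lemma cmp_madd_right:
  assumes "f \<in> Hom C X Y" "g \<in> Hom C Y Z" "g' \<in> Hom C Y Z"
  shows "cmp C (madd C g g') f = madd C (cmp C g f) (cmp C g' f)"
proof -
  have "X \<in> obj C" "Y \<in> obj C" "Z \<in> obj C" using assms Hom_objs[OF category] by blast+
  then show ?thesis using assms preadditive unfolding preadditive_def by blast
qed

lemma mzero_add: "f \<in> Hom C X Y \<Longrightarrow> madd C (mzero C X Y) f = f"
  using madd_commute madd_mzero mzero_Hom Hom_objs[OF category] by metis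

lemma idempotent_add_mzero:
  assumes x: "x \<in> Hom C X Y" and xx: "madd C x x = x" shows "x = mzero C X Y"
proof -
  have "x = madd C x (madd C x (mneg C x))" using madd_mneg[OF x] madd_mzero[OF x] by simp
  also have "\<dots> = madd C (madd C x x) (mneg C x)" using madd_assoc x mneg_Hom[OF x] by simp
  finally show ?thesis using xx madd_mneg[OF x] by simp
qed

lemma cmp_mzero:
  assumes g: "g \<in> Hom C Y Z" and X: "X \<in> obj C" shows "cmp C g (mzero C X Y) = mzero C X Z"
proof -
  have z: "mzero C X Y \<in> Hom C X Y" using mzero_Hom X Hom_objs[OF category g] by simp
  then have "madd C (cmp C g (mzero C X Y)) (cmp C g (mzero C X Y)) = cmp C g (mzero C X Y)"
    using cmp_madd_left[OF z z g] madd_mzero[OF z] by simp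
  then show ?thesis using idempotent_add_mzero cmp_Hom[OF category z g] by blast
qed

lemma eq_madd_if_diff_eq:
  assumes g: "g \<in> Hom C X Y" and u: "u \<in> Hom C X Y" and diff: "madd C g (mneg C u) = v"
  shows "g = madd C u v"
proof -
  have n: "mneg C u \<in> Hom C X Y" using mneg_Hom u .
  have "madd C u v = madd C u (madd C (mneg C u) g)" using diff madd_commute g n by metis
  also have "\<dots> = madd C (madd C u (mneg C u)) g" using madd_assoc u n g by metis
  also have "\<dots> = g" using madd_mneg[OF u] mzero_add[OF g] by simp
  finally show ?thesis by simp
qed

lemma stable_eq_factors_through_deflation:
  assumes "stable_eq C E g u" "u \<in> Hom C X Y" "deflation C E d" "d \<in> Hom C P Y"
  shows "\<exists>k\<in>Hom C X P. g = madd C u (cmp C d k)"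
proof -
  have g: "g \<in> Hom C X Y" using assms(1,2) unfolding stable_eq_def Hom_def by auto
  then have "madd C g (mneg C u) \<in> Hom C X Y" using madd_Hom mneg_Hom assms(2) by blast
  then obtain k where "k \<in> Hom C X P" "madd C g (mneg C u) = cmp C d k"
    using stably_zero_factors_through_deflation[OF category] assms
    unfolding stable_eq_def by metis
  then show ?thesis using eq_madd_if_diff_eq[OF g assms(2)] by blast
qed

lemma stable_eq_factors_through_inflation:
  assumes "stable_eq C E g u" "u \<in> Hom C X Y" "inflation C E i" "i \<in> Hom C X I"
  shows "\<exists>k\<in>Hom C I Y. g = madd C u (cmp C k i)"
proof -
  have g: "g \<in> Hom C X Y" using assms(1,2) unfolding stable_eq_def Hom_def by auto
  then have "madd C g (mneg C u) \<in> Hom C X Y" using madd_Hom mneg_Hom assms(2) by blast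
  then obtain k where "k \<in> Hom C I Y" "madd C g (mneg C u) = cmp C k i"
    using stably_zero_factors_through_inflation[OF category] assms
    unfolding stable_eq_def by metis
  then show ?thesis using eq_madd_if_diff_eq[OF g assms(2)] by blast
qed

lemma biproduct_row_cmp_column:
  assumes bp: "biproduct C A B S i1 i2 p1 p2"
    and x: "x \<in> Hom C A Z" and y: "y \<in> Hom C B Z"
    and u: "u \<in> Hom C W A" and v: "v \<in> Hom C W B"
  shows "cmp C (madd C (cmp C x p1) (cmp C y p2)) (madd C (cmp C i1 u) (cmp C i2 v))
       = madd C (cmp C x u) (cmp C y v)"
proof -
  let ?row = "madd C (cmp C x p1) (cmp C y p2)"
  have i1: "i1 \<in> Hom C A S" and i2: "i2 \<in> Hom C B S"
    and p1: "p1 \<in> Hom C S A" and p2: "p2 \<in> Hom C S B"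
    and p1i1: "cmp C p1 i1 = idm C A" and p2i2: "cmp C p2 i2 = idm C B"
    and p1i2: "cmp C p1 i2 = mzero C B A" and p2i1: "cmp C p2 i1 = mzero C A B"
    using bp unfolding biproduct_def by auto
  have A: "A \<in> obj C" and B: "B \<in> obj C"
    using Hom_objs[OF category] x y by auto
  have xp1: "cmp C x p1 \<in> Hom C S Z" and yp2: "cmp C y p2 \<in> Hom C S Z"
    using cmp_Hom[OF category] p1 x p2 y by auto
  have row: "?row \<in> Hom C S Z" using madd_Hom xp1 yp2 .
  have "cmp C ?row i1 = madd C (cmp C x (cmp C p1 i1)) (cmp C y (cmp C p2 i1))"
    using cmp_madd_right[OF i1 xp1 yp2] cmp_assoc[OF category i1 p1 x]
      cmp_assoc[OF category i1 p2 y] by simp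
  also have "\<dots> = x"
    using p1i1 p2i1 cmp_idm_right[OF category x] cmp_mzero[OF y A] madd_mzero[OF x] by simp
  finally have row_i1: "cmp C ?row i1 = x" .
  have "cmp C ?row i2 = madd C (cmp C x (cmp C p1 i2)) (cmp C y (cmp C p2 i2))"
    using cmp_madd_right[OF i2 xp1 yp2] cmp_assoc[OF category i2 p1 x]
      cmp_assoc[OF category i2 p2 y] by simp
  also have "\<dots> = y"
    using p1i2 p2i2 cmp_idm_right[OF category y] cmp_mzero[OF x B] mzero_add[OF y] by simp
  finally have row_i2: "cmp C ?row i2 = y" .
  have "cmp C ?row (madd C (cmp C i1 u) (cmp C i2 v))
      = madd C (cmp C (cmp C ?row i1) u) (cmp C (cmp C ?row i2) v)"
    using cmp_madd_left[OF cmp_Hom[OF category u i1] cmp_Hom[OF category v i2] row]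
      cmp_assoc[OF category u i1 row] cmp_assoc[OF category v i2 row] by simp
  then show ?thesis using row_i1 row_i2 by simp
qed

lemma is_precover_biproduct_deflation:
  assumes f: "is_stable_precover C E T M B f"
    and d: "deflation C E d" "d \<in> Hom C P M"
    and bp: "biproduct C B P S i1 i2 p1 p2" and S: "S \<in> T"
  shows "is_precover C T M S (madd C (cmp C f p1) (cmp C d p2))"
  unfolding is_precover_def
proof (intro conjI ballI)
  have fH: "f \<in> Hom C B M" using f unfolding is_stable_precover_def by auto
  have p1: "p1 \<in> Hom C S B" and p2: "p2 \<in> Hom C S P" and i1: "i1 \<in> Hom C B S"
    and i2: "i2 \<in> Hom C P S" using bp unfolding biproduct_def by auto
  show "S \<in> T" by fact
  show "madd C (cmp C f p1) (cmp C d p2) \<in> Hom C S M"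
    using madd_Hom cmp_Hom[OF category] p1 fH p2 d(2) by blast
  fix B' g assume "B' \<in> T" "g \<in> Hom C B' M"
  then obtain h where h: "h \<in> Hom C B' B" and "stable_eq C E g (cmp C f h)"
    using f unfolding is_stable_precover_def by blast
  then obtain k where k: "k \<in> Hom C B' P" and "g = madd C (cmp C f h) (cmp C d k)"
    using stable_eq_factors_through_deflation d cmp_Hom[OF category h fH] by blast
  then have "g = cmp C (madd C (cmp C f p1) (cmp C d p2)) (madd C (cmp C i1 h) (cmp C i2 k))"
    using biproduct_row_cmp_column[OF bp fH d(2) h k] by simp
  moreover have "madd C (cmp C i1 h) (cmp C i2 k) \<in> Hom C B' S"
    using madd_Hom cmp_Hom[OF category] h i1 k i2 by blast
  ultimately show "\<exists>h\<in>Hom C B' S. g = cmp C (madd C (cmp C f p1) (cmp C d p2)) h" by blast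
qed

lemma is_preenvelope_biproduct_inflation:
  assumes f: "is_stable_preenvelope C E T M B f"
    and i: "inflation C E i" "i \<in> Hom C M I"
    and bp: "biproduct C B I S i1 i2 p1 p2" and S: "S \<in> T"
  shows "is_preenvelope C T M S (madd C (cmp C i1 f) (cmp C i2 i))"
  unfolding is_preenvelope_def
proof (intro conjI ballI)
  have fH: "f \<in> Hom C M B" using f unfolding is_stable_preenvelope_def by auto
  have p1: "p1 \<in> Hom C S B" and p2: "p2 \<in> Hom C S I" and i1: "i1 \<in> Hom C B S"
    and i2: "i2 \<in> Hom C I S" using bp unfolding biproduct_def by auto
  show "S \<in> T" by fact
  show "madd C (cmp C i1 f) (cmp C i2 i) \<in> Hom C M S"
    using madd_Hom cmp_Hom[OF category] i1 fH i2 i(2) by blast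
  fix B' g assume "B' \<in> T" "g \<in> Hom C M B'"
  then obtain h where h: "h \<in> Hom C B B'" and "stable_eq C E g (cmp C h f)"
    using f unfolding is_stable_preenvelope_def by blast
  then obtain k where k: "k \<in> Hom C I B'" and "g = madd C (cmp C h f) (cmp C k i)"
    using stable_eq_factors_through_inflation i cmp_Hom[OF category fH h] by blast
  then have "g = cmp C (madd C (cmp C h p1) (cmp C k p2)) (madd C (cmp C i1 f) (cmp C i2 i))"
    using biproduct_row_cmp_column[OF bp h k fH i(2)] by simp
  moreover have "madd C (cmp C h p1) (cmp C k p2) \<in> Hom C S B'"
    using madd_Hom cmp_Hom[OF category] h p1 k p2 by blast
  ultimately show "\<exists>h\<in>Hom C S B'. g = cmp C h (madd C (cmp C i1 f) (cmp C i2 i))" by blast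
qed

end

lemma frobenius_preadditive: "frobenius_category C E \<Longrightarrow> preadditive C"
  unfolding frobenius_category_def additive_def by auto

lemma frobenius_exact_structure: "frobenius_category C E \<Longrightarrow> exact_structure C E"
  unfolding frobenius_category_def by (elim conjE)

lemma frobenius_projective_iff_injective:
  "frobenius_category C E \<Longrightarrow> projective C E P \<longleftrightarrow> injective C E P"
  unfolding frobenius_category_def by (elim conjE) (rule spec)

lemma frobenius_enough_projectives:
  "frobenius_category C E \<Longrightarrow> M \<in> obj C \<Longrightarrow>
   \<exists>d. deflation C E d \<and> cd C d = M \<and> projective C E (dm C d)"
  unfolding frobenius_category_def by (elim conjE) (erule bspec)

lemma frobenius_enough_injectives:
  "frobenius_category C E \<Longrightarrow> M \<in> obj C \<Longrightarrow>
   \<exists>i. inflation C E i \<and> dm C i = M \<and> injective C E (cd C i)"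
  unfolding frobenius_category_def by (elim conjE) (erule bspec)

lemma frobenius_proj_inj_deflation:
  assumes fr: "frobenius_category C E" and M: "M \<in> obj C"
  shows "\<exists>P d. proj_inj C E P \<and> deflation C E d \<and> d \<in> Hom C P M"
proof -
  obtain d where d: "deflation C E d" "cd C d = M" "projective C E (dm C d)"
    using frobenius_enough_projectives[OF fr M] by blast
  have "d \<in> mor C" using exact_structure_deflation_mor[OF frobenius_exact_structure[OF fr] d(1)] .
  then show ?thesis
    using d frobenius_projective_iff_injective[OF fr] unfolding proj_inj_def Hom_def by blast
qed

lemma frobenius_proj_inj_inflation:
  assumes fr: "frobenius_category C E" and M: "M \<in> obj C"
  shows "\<exists>I i. proj_inj C E I \<and> inflation C E i \<and> i \<in> Hom C M I"
proof -
  obtain i where i: "inflation C E i" "dm C i = M" "injective C E (cd C i)"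
    using frobenius_enough_injectives[OF fr M] by blast
  have "i \<in> mor C" using exact_structure_inflation_mor[OF frobenius_exact_structure[OF fr] i(1)] .
  then show ?thesis
    using i frobenius_projective_iff_injective[OF fr] unfolding proj_inj_def Hom_def by blast
qed

lemma additive_subcat_biproduct:
  assumes "additive_subcat C T" "X \<in> T" "Y \<in> T"
  shows "\<exists>S i1 i2 p1 p2. biproduct C X Y S i1 i2 p1 p2 \<and> S \<in> T"
proof -
  have "\<forall>X\<in>T. \<forall>Y\<in>T. \<exists>S i1 i2 p1 p2. biproduct C X Y S i1 i2 p1 p2 \<and> S \<in> T"
    using assms(1) unfolding additive_subcat_def by (elim conjE)
  then show ?thesis using assms(2,3) by blast
qed

theorem lemmaA7:
  fixes C :: "('o, 'm) addcat" and E :: "('m \<times> 'm) set" and T :: "'o set" and M :: 'o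
  assumes "frobenius_category C E"
    and "additive_subcat C T"
    and "\<forall>P. proj_inj C E P \<longrightarrow> P \<in> T"
    and "M \<in> obj C"
  shows "(has_stable_precover C E T M \<longrightarrow> has_precover C T M) \<and>
         (has_stable_preenvelope C E T M \<longrightarrow> has_preenvelope C T M)"
proof -
  interpret preadditive_category C using frobenius_preadditive[OF assms(1)] by unfold_locales
  have "has_precover C T M" if stable: "has_stable_precover C E T M"
  proof -
    obtain B f where f: "is_stable_precover C E T M B f"
      using stable unfolding has_stable_precover_def by blast
    obtain P d where d: "proj_inj C E P" "deflation C E d" "d \<in> Hom C P M"
      using frobenius_proj_inj_deflation[OF assms(1,4)] by blast
    have "B \<in> T" using f unfolding is_stable_precover_def by blast
    moreover have "P \<in> T" using d(1) assms(3) by blast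
    ultimately obtain S i1 i2 p1 p2 where "biproduct C B P S i1 i2 p1 p2" "S \<in> T"
      using additive_subcat_biproduct[OF assms(2)] by blast
    then show ?thesis
      using is_precover_biproduct_deflation[OF f d(2,3)] unfolding has_precover_def by blast
  qed
  moreover have "has_preenvelope C T M" if stable: "has_stable_preenvelope C E T M"
  proof -
    obtain B f where f: "is_stable_preenvelope C E T M B f"
      using stable unfolding has_stable_preenvelope_def by blast
    obtain I i where i: "proj_inj C E I" "inflation C E i" "i \<in> Hom C M I"
      using frobenius_proj_inj_inflation[OF assms(1,4)] by blast
    have "B \<in> T" using f unfolding is_stable_preenvelope_def by blast
    moreover have "I \<in> T" using i(1) assms(3) by blast
    ultimately obtain S i1 i2 p1 p2 where "biproduct C B I S i1 i2 p1 p2" "S \<in> T"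
      using additive_subcat_biproduct[OF assms(2)] by blast
    then show ?thesis
      using is_preenvelope_biproduct_inflation[OF f i(2,3)] unfolding has_preenvelope_def by blast
  qed
  ultimately show ?thesis by blast
qed

end
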